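(* If $(X,\Pi)$ is a finite quasiconcave quasisubmodular aggregative game for which a fESS exists, then imitation is not subject to a money pump.
   Context: An aggregative game $(X,\Pi)$ consists of: a totally ordered action set $X$ and a totally ordered set $Z$; a symmetric aggregator $a:X\times X\to Z$ ($a(x,y)=a(y,x)$) that is monotone increasing (if $x''\ge x'$, $y''\ge y'$ and $(x'',y'')\neq(x',y')$ then $a(x'',y'')>a(x',y')$); and $\Pi:X\times Z\to\mathbb{R}$; the underlying symmetric two-player game has payoff $\pi(x,y)=\Pi(x,a(x,y))$. Finite means $X$ finite. Quasisubmodular: for all $z''>z'$ and $x''>x'$, $\Pi(x'',z'')-\Pi(x',z'')\ge0\Rightarrow\Pi(x'',z')-\Pi(x',z')\ge0$ and the same with $>0$ in both places. Quasiconcave: for all $x<x'<x''$ and $z$, $\Pi(x',z)\ge\min\{\Pi(x,z),\Pi(x'',z)\}$. fESS: $x^*$ with $\Pi(x^*,a(x^*,x))\ge\Pi(x,a(x^*,x))$ for all $x\in X$. Relative payoff: $\Delta(x,y)=\pi(x,y)-\pi(y,x)$. Imitate-the-best: given initial $y_0\in X$ and any opponent sequence $(x_t)_{t\ge0}$, $y_t=x_{t-1}$ if $\Delta(x_{t-1},y_{t-1})>0$ and $y_t=y_{t-1}$ otherwise. Imitation is not subject to a money pump if there is $M\in\mathbb{R}_+$ such that for every $y_0\in X$ and every sequence $(x_t)$, $\limsup_{T\to\infty}\sum_{t=0}^T\Delta(x_t,y_t)\le M$. *)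

theory Defs
  imports Complex_Main "HOL-Library.Liminf_Limsup" "HOL-Library.Extended_Real"
begin

definition symmetric_aggregator :: "('x \<Rightarrow> 'x \<Rightarrow> 'z) \<Rightarrow> bool" where
  "symmetric_aggregator a \<longleftrightarrow> (\<forall>x y. a x y = a y x)"

definition monotone_aggregator :: "('x::linorder \<Rightarrow> 'x \<Rightarrow> 'z::linorder) \<Rightarrow> bool" where
  "monotone_aggregator a \<longleftrightarrow>
     (\<forall>x' x'' y' y''. x'' \<ge> x' \<and> y'' \<ge> y' \<and> (x'', y'') \<noteq> (x', y') \<longrightarrow> a x'' y'' > a x' y')"

definition aggregative_game :: "('x::linorder \<Rightarrow> 'x \<Rightarrow> 'z::linorder) \<Rightarrow> bool" where
  "aggregative_game a \<longleftrightarrow> symmetric_aggregator a \<and> monotone_aggregator a"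

definition payoff :: "('x \<Rightarrow> 'x \<Rightarrow> 'z) \<Rightarrow> ('x \<Rightarrow> 'z \<Rightarrow> real) \<Rightarrow> 'x \<Rightarrow> 'x \<Rightarrow> real" where
  "payoff a \<Pi> x y = \<Pi> x (a x y)"

definition quasisubmodular :: "('x::linorder \<Rightarrow> 'z::linorder \<Rightarrow> real) \<Rightarrow> bool" where
  "quasisubmodular \<Pi> \<longleftrightarrow>
     (\<forall>z' z'' x' x''. z'' > z' \<and> x'' > x' \<longrightarrow>
        (\<Pi> x'' z'' - \<Pi> x' z'' \<ge> 0 \<longrightarrow> \<Pi> x'' z' - \<Pi> x' z' \<ge> 0) \<and>
        (\<Pi> x'' z'' - \<Pi> x' z'' > 0 \<longrightarrow> \<Pi> x'' z' - \<Pi> x' z' > 0))"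

definition quasiconcave :: "('x::linorder \<Rightarrow> 'z \<Rightarrow> real) \<Rightarrow> bool" where
  "quasiconcave \<Pi> \<longleftrightarrow>
     (\<forall>x x' x'' z. x < x' \<and> x' < x'' \<longrightarrow> \<Pi> x' z \<ge> min (\<Pi> x z) (\<Pi> x'' z))"

definition fESS :: "('x \<Rightarrow> 'x \<Rightarrow> 'z) \<Rightarrow> ('x \<Rightarrow> 'z \<Rightarrow> real) \<Rightarrow> 'x \<Rightarrow> bool" where
  "fESS a \<Pi> xs \<longleftrightarrow> (\<forall>x. \<Pi> xs (a xs x) \<ge> \<Pi> x (a xs x))"

definition relpay :: "('x \<Rightarrow> 'x \<Rightarrow> 'z) \<Rightarrow> ('x \<Rightarrow> 'z \<Rightarrow> real) \<Rightarrow> 'x \<Rightarrow> 'x \<Rightarrow> real" where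
  "relpay a \<Pi> x y = payoff a \<Pi> x y - payoff a \<Pi> y x"

primrec imitate :: "('x \<Rightarrow> 'x \<Rightarrow> 'z) \<Rightarrow> ('x \<Rightarrow> 'z \<Rightarrow> real) \<Rightarrow> 'x \<Rightarrow> (nat \<Rightarrow> 'x) \<Rightarrow> nat \<Rightarrow> 'x" where
  "imitate a \<Pi> y0 xs 0 = y0"
| "imitate a \<Pi> y0 xs (Suc t) =
     (if relpay a \<Pi> (xs t) (imitate a \<Pi> y0 xs t) > 0 then xs t else imitate a \<Pi> y0 xs t)"

definition no_money_pump :: "('x \<Rightarrow> 'x \<Rightarrow> 'z) \<Rightarrow> ('x \<Rightarrow> 'z \<Rightarrow> real) \<Rightarrow> bool" where
  "no_money_pump a \<Pi> \<longleftrightarrow>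
     (\<exists>M::real. M \<ge> 0 \<and> (\<forall>y0 xs.
        limsup (\<lambda>T. ereal (\<Sum>t\<le>T. relpay a \<Pi> (xs t) (imitate a \<Pi> y0 xs t))) \<le> ereal M))"

end

theory Submission
  imports Defs
begin

text \<open>
  Call \<open>x\<close> a beater of \<open>y\<close> when \<open>\<Delta>(x, y) > 0\<close>; imitation only ever moves from \<open>y\<close> to a beater
  of \<open>y\<close>. Quasiconcavity, quasisubmodularity and the fESS \<open>e\<close> force beaters to lie on the side
  of \<open>y\<close> towards \<open>e\<close> or beyond \<open>e\<close>, and a strategy beating a strategy on one side of it also
  beats everything farther out on that side. Consequently the strategies below \<open>e\<close> (ascending) and above
  \<open>e\<close> (descending) interleave into one linear order with \<open>e\<close> on top in which every beater is
  strictly higher than the strategy it beats. Along any play the imitator therefore switches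
  at most \<open>|X|\<close> times, each switch gaining at most \<open>max \<Delta>\<close>, while all other rounds have
  \<open>\<Delta> \<le> 0\<close>.
\<close>

lemma relpay_self [simp]: "relpay a \<Pi> x x = 0"
  by (simp add: relpay_def)

lemma relpay_swap: "relpay a \<Pi> y x = - relpay a \<Pi> x y"
  by (simp add: relpay_def)

lemma relpay_imitate_le_potential_increase:
  fixes \<phi> :: "'x \<Rightarrow> nat"
  assumes bound: "\<And>x y. relpay a \<Pi> x y \<le> B"
    and potential: "\<And>x y. relpay a \<Pi> x y > 0 \<Longrightarrow> \<phi> y < \<phi> x"
  shows "relpay a \<Pi> (xs t) (imitate a \<Pi> y0 xs t)
    \<le> B * (real (\<phi> (imitate a \<Pi> y0 xs (Suc t))) - real (\<phi> (imitate a \<Pi> y0 xs t)))"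
proof (cases "relpay a \<Pi> (xs t) (imitate a \<Pi> y0 xs t) > 0")
  case True
  have "B \<ge> 0"
    using bound[of y0 y0] by simp
  moreover have "1 \<le> real (\<phi> (xs t)) - real (\<phi> (imitate a \<Pi> y0 xs t))"
    using potential[OF True] by linarith
  ultimately have "B \<le> B * (real (\<phi> (xs t)) - real (\<phi> (imitate a \<Pi> y0 xs t)))"
    using mult_left_mono by fastforce
  then show ?thesis
    using True bound by (auto intro: order.trans)
qed simp

lemma sum_relpay_imitate_le_potential_increase:
  fixes \<phi> :: "'x \<Rightarrow> nat"
  assumes "\<And>x y. relpay a \<Pi> x y \<le> B"
    and "\<And>x y. relpay a \<Pi> x y > 0 \<Longrightarrow> \<phi> y < \<phi> x"
  shows "(\<Sum>t\<le>T. relpay a \<Pi> (xs t) (imitate a \<Pi> y0 xs t))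
    \<le> B * (real (\<phi> (imitate a \<Pi> y0 xs (Suc T))) - real (\<phi> y0))"
proof -
  let ?p = "\<lambda>t. real (\<phi> (imitate a \<Pi> y0 xs t))"
  have "(\<Sum>t\<le>T. relpay a \<Pi> (xs t) (imitate a \<Pi> y0 xs t)) \<le> (\<Sum>t<Suc T. B * (?p (Suc t) - ?p t))"
    unfolding lessThan_Suc_atMost
    by (intro sum_mono relpay_imitate_le_potential_increase assms)
  also have "\<dots> = B * (?p (Suc T) - ?p 0)"
    by (simp only: sum_distrib_left[symmetric] sum_lessThan_telescope[of ?p])
  finally show ?thesis
    by simp
qed

lemma no_money_pump_if_potential:
  fixes a :: "'x::finite \<Rightarrow> 'x \<Rightarrow> 'z" and \<phi> :: "'x \<Rightarrow> nat"
  assumes potential: "\<And>x y. relpay a \<Pi> x y > 0 \<Longrightarrow> \<phi> y < \<phi> x"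
  shows "no_money_pump a \<Pi>"
proof -
  define B where "B = Max (range (\<lambda>(x, y). relpay a \<Pi> x y))"
  define N where "N = Max (range \<phi>)"
  have bound: "relpay a \<Pi> x y \<le> B" for x y
    unfolding B_def by (rule Max_ge) (auto intro: image_eqI[of _ _ "(x, y)"])
  have "B \<ge> 0"
    using bound[of undefined undefined] by simp
  have "(\<Sum>t\<le>T. relpay a \<Pi> (xs t) (imitate a \<Pi> y0 xs t)) \<le> B * real N" for y0 xs T
  proof -
    have "\<phi> (imitate a \<Pi> y0 xs (Suc T)) \<le> N"
      unfolding N_def by (rule Max_ge) auto
    then have "real (\<phi> (imitate a \<Pi> y0 xs (Suc T))) - real (\<phi> y0) \<le> real N"
      by linarith
    then have "B * (real (\<phi> (imitate a \<Pi> y0 xs (Suc T))) - real (\<phi> y0)) \<le> B * real N"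
      using \<open>B \<ge> 0\<close> by (rule mult_left_mono)
    then show ?thesis
      using sum_relpay_imitate_le_potential_increase[OF bound potential] by (rule order.trans[rotated])
  qed
  then show ?thesis
    unfolding no_money_pump_def using \<open>B \<ge> 0\<close>
    by (intro exI[of _ "B * real N"]) (auto intro: Limsup_bounded)
qed

locale quasi_aggregative_game =
  fixes a :: "'x::linorder \<Rightarrow> 'x \<Rightarrow> 'z::linorder" and \<Pi> :: "'x \<Rightarrow> 'z \<Rightarrow> real"
  assumes aggregative: "aggregative_game a"
    and quasiconcave: "quasiconcave \<Pi>"
    and quasisubmodular: "quasisubmodular \<Pi>"
begin

abbreviation beats :: "'x \<Rightarrow> 'x \<Rightarrow> bool" where
  "beats x y \<equiv> relpay a \<Pi> x y > 0"

lemma aggregator_sym: "a x y = a y x"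
  using aggregative by (simp add: aggregative_game_def symmetric_aggregator_def)

lemma aggregator_less: "x' \<le> x'' \<Longrightarrow> y' \<le> y'' \<Longrightarrow> (x'', y'') \<noteq> (x', y') \<Longrightarrow> a x' y' < a x'' y''"
  using aggregative by (simp add: aggregative_game_def monotone_aggregator_def)

lemma quasiconcaveD: "x < x' \<Longrightarrow> x' < x'' \<Longrightarrow> min (\<Pi> x z) (\<Pi> x'' z) \<le> \<Pi> x' z"
  using quasiconcave by (simp add: quasiconcave_def)

lemma quasisubmodular_ge: "z' < z'' \<Longrightarrow> x' < x'' \<Longrightarrow> \<Pi> x' z'' \<le> \<Pi> x'' z'' \<Longrightarrow> \<Pi> x' z' \<le> \<Pi> x'' z'"
  using quasisubmodular unfolding quasisubmodular_def by fastforce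

lemma quasisubmodular_gt: "z' < z'' \<Longrightarrow> x' < x'' \<Longrightarrow> \<Pi> x' z'' < \<Pi> x'' z'' \<Longrightarrow> \<Pi> x' z' < \<Pi> x'' z'"
  using quasisubmodular unfolding quasisubmodular_def by fastforce

lemma relpay_eq: "relpay a \<Pi> x y = \<Pi> x (a x y) - \<Pi> y (a x y)"
  by (simp add: relpay_def payoff_def aggregator_sym[of y x])

lemma beats_lower: assumes "l' < l" "l < r" "beats r l" shows "beats r l'"
proof -
  have "\<Pi> l (a l r) < \<Pi> r (a l r)"
    using assms(3) by (simp add: relpay_eq aggregator_sym[of r l])
  moreover have "a l' r < a l r"
    using aggregator_less[of l' l r r] assms by auto
  ultimately have "\<Pi> l (a l' r) < \<Pi> r (a l' r)"
    using quasisubmodular_gt assms(2) by blast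
  moreover have "min (\<Pi> l' (a l' r)) (\<Pi> r (a l' r)) \<le> \<Pi> l (a l' r)"
    using quasiconcaveD[OF assms(1,2)] .
  ultimately show ?thesis
    by (simp add: relpay_eq aggregator_sym[of r l'] min_def split: if_splits)
qed

lemma beats_higher: assumes "l < r" "r < r'" "beats l r" shows "beats l r'"
proof -
  have "\<Pi> r (a l r) < \<Pi> l (a l r)"
    using assms(3) by (simp add: relpay_eq)
  moreover have "a l r < a l r'"
    using aggregator_less[of l l r r'] assms by auto
  ultimately have "\<Pi> r (a l r') < \<Pi> l (a l r')"
    using quasisubmodular_ge assms(1) by (meson not_le)
  moreover have "min (\<Pi> l (a l r')) (\<Pi> r' (a l r')) \<le> \<Pi> r (a l r')"
    using quasiconcaveD[OF assms(1,2)] .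
  ultimately show ?thesis
    by (simp add: relpay_eq min_def split: if_splits)
qed

end

locale fESS_game = quasi_aggregative_game a \<Pi>
  for a :: "'x::linorder \<Rightarrow> 'x \<Rightarrow> 'z::linorder" and \<Pi> +
  fixes e :: 'x
  assumes fESS: "fESS a \<Pi> e"
begin

lemma fESS_payoff_ge: "\<Pi> x (a e x) \<le> \<Pi> e (a e x)"
  using fESS by (simp add: fESS_def)

lemma not_beats_fESS: "\<not> beats x e"
  using fESS_payoff_ge[of x] by (simp add: relpay_eq aggregator_sym[of x e])

lemma beats_below_fESS_imp_greater: assumes "beats x y" "y < e" shows "y < x"
proof (rule ccontr)
  assume "\<not> y < x"
  with assms(1) have "x < y"
    by (metis linorder_neqE relpay_self less_irrefl)
  have "\<Pi> x (a e x) \<le> \<Pi> y (a e x)"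
    using quasiconcaveD[OF \<open>x < y\<close> assms(2), where z = "a e x"] fESS_payoff_ge[of x] by linarith
  moreover have "a x y < a e x"
    using aggregator_less[of x x y e] assms(2) \<open>x < y\<close> aggregator_sym[of e x] by auto
  ultimately have "\<Pi> x (a x y) \<le> \<Pi> y (a x y)"
    using quasisubmodular_ge \<open>x < y\<close> by blast
  with assms(1) show False
    by (simp add: relpay_eq)
qed

lemma beats_above_fESS_imp_less: assumes "beats x y" "e < y" shows "x < y"
proof (rule ccontr)
  assume "\<not> x < y"
  with assms(1) have "y < x"
    by (metis linorder_neqE relpay_self less_irrefl)
  have "\<Pi> x (a e x) \<le> \<Pi> y (a e x)"
    using quasiconcaveD[OF assms(2) \<open>y < x\<close>, where z = "a e x"] fESS_payoff_ge[of x] by linarith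
  moreover have "a e x < a x y"
    using aggregator_less[of e y x x] assms(2) \<open>y < x\<close> aggregator_sym[of y x] by auto
  moreover have "\<Pi> y (a x y) < \<Pi> x (a x y)"
    using assms(1) by (simp add: relpay_eq)
  ultimately show False
    using quasisubmodular_gt \<open>y < x\<close> by (meson not_le)
qed

definition beaten_by_le :: "'x \<Rightarrow> 'x \<Rightarrow> bool" where
  "beaten_by_le l r \<longleftrightarrow> (\<exists>l'\<le>l. beats l' r)"

lemma beaten_by_le_mono: "beaten_by_le l r \<Longrightarrow> l \<le> l2 \<Longrightarrow> beaten_by_le l2 r"
  unfolding beaten_by_le_def by (meson order.trans)

text \<open>
  \<open>rank_set x\<close> is the initial segment ending at \<open>x\<close> of the merged order:
  strategies \<open>l < e\<close> ascending, strategies \<open>r > e\<close> descending, with \<open>l\<close> strictly below \<open>r\<close>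
  exactly when no strategy \<open>\<le> l\<close> beats \<open>r\<close>, and \<open>e\<close> on top.
\<close>
definition rank_set :: "'x \<Rightarrow> 'x set" where
  "rank_set x =
    (if x < e then {l. l \<le> x} \<union> {r. e < r \<and> beaten_by_le x r}
     else if e < x then {r. x \<le> r} \<union> {l. l < e \<and> \<not> beaten_by_le l x}
     else UNIV)"

lemma rank_set_below: "x < e \<Longrightarrow> rank_set x = {l. l \<le> x} \<union> {r. e < r \<and> beaten_by_le x r}"
  by (simp add: rank_set_def)

lemma rank_set_above: "e < x \<Longrightarrow> rank_set x = {r. x \<le> r} \<union> {l. l < e \<and> \<not> beaten_by_le l x}"
  by (simp add: rank_set_def less_not_sym)

lemma fESS_notin_rank_set: "y \<noteq> e \<Longrightarrow> e \<notin> rank_set y"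
  by (cases "y < e") (auto simp: rank_set_def)

lemma rank_set_psubset_below_below:
  assumes "beats x y" "y < e" "x < e"
  shows "rank_set y \<subset> rank_set x"
proof -
  have "y < x"
    using beats_below_fESS_imp_greater assms(1,2) .
  then have "rank_set y \<subseteq> rank_set x"
    using assms(2,3) beaten_by_le_mono[of y _ x] by (auto simp: rank_set_below)
  moreover have "x \<in> rank_set x" "x \<notin> rank_set y"
    using \<open>y < x\<close> assms(3) by (auto simp: rank_set_below)
  ultimately show ?thesis
    by blast
qed

lemma rank_set_psubset_below_above:
  assumes "beats x y" "y < e" "e < x"
  shows "rank_set y \<subset> rank_set x"
proof -
  have no_beater: "\<not> beats l x" if "l \<le> y" for l
  proof (cases "l = y")
    case True
    then show ?thesis
      using assms(1) relpay_swap[of a \<Pi> x y] by simp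
  next
    case False
    then have "beats x l"
      using beats_lower[OF _ _ assms(1)] that assms(2,3) by auto
    then show ?thesis
      using relpay_swap[of a \<Pi> l x] by simp
  qed
  have "x \<le> r" if r: "beaten_by_le y r" "e < r" for r
  proof (rule ccontr)
    assume "\<not> x \<le> r"
    obtain l where "l \<le> y" "beats l r"
      using r(1) unfolding beaten_by_le_def by blast
    moreover have "l < r"
      using \<open>l \<le> y\<close> assms(2) r(2) by auto
    moreover have "r < x"
      using \<open>\<not> x \<le> r\<close> by simp
    ultimately show False
      using beats_higher no_beater by blast
  qed
  moreover have "\<not> beaten_by_le l x" if "l \<le> y" for l
    using that no_beater unfolding beaten_by_le_def by auto
  ultimately have "rank_set y \<subseteq> rank_set x"
    using assms(2,3) by (auto simp: rank_set_below rank_set_above)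
  moreover have "x \<in> rank_set x" "x \<notin> rank_set y"
    using assms(2,3) no_beater by (auto simp: rank_set_below rank_set_above beaten_by_le_def)
  ultimately show ?thesis
    by blast
qed

lemma rank_set_psubset_above_below:
  assumes "beats x y" "e < y" "x < e"
  shows "rank_set y \<subset> rank_set x"
proof -
  have beaten: "beaten_by_le x r" if "y \<le> r" for r
    using that beats_higher[of x y r] assms unfolding beaten_by_le_def
    by (cases "r = y") auto
  have "l \<le> x" if "\<not> beaten_by_le l y" for l
    using that assms(1) unfolding beaten_by_le_def by (meson linear)
  then have "rank_set y \<subseteq> rank_set x"
    using assms(2,3) beaten by (auto simp: rank_set_below rank_set_above)
  moreover have "x \<in> rank_set x" "x \<notin> rank_set y"
    using assms by (auto simp: rank_set_below rank_set_above beaten_by_le_def)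
  ultimately show ?thesis
    by blast
qed

lemma rank_set_psubset_above_above:
  assumes "beats x y" "e < y" "e < x"
  shows "rank_set y \<subset> rank_set x"
proof -
  have "x < y"
    using beats_above_fESS_imp_less assms(1,2) .
  have "\<not> beaten_by_le l x" if "l < e" "\<not> beaten_by_le l y" for l
    using that beats_higher[of _ x y] \<open>x < y\<close> assms(3)
    unfolding beaten_by_le_def by (meson le_less_trans less_trans)
  then have "rank_set y \<subseteq> rank_set x"
    using assms(2,3) \<open>x < y\<close> by (auto simp: rank_set_above)
  moreover have "x \<in> rank_set x" "x \<notin> rank_set y"
    using assms(3) \<open>x < y\<close> by (auto simp: rank_set_above)
  ultimately show ?thesis
    by blast
qed

lemma beats_imp_rank_set_psubset:
  assumes "beats x y"
  shows "rank_set y \<subset> rank_set x"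
proof -
  have "y \<noteq> e"
    using assms not_beats_fESS by blast
  consider "x = e" | "x < e" | "e < x"
    by fastforce
  then show ?thesis
  proof cases
    case 1
    then show ?thesis
      using fESS_notin_rank_set[OF \<open>y \<noteq> e\<close>] by (auto simp: rank_set_def)
  next
    case 2
    then show ?thesis
      using \<open>y \<noteq> e\<close> assms rank_set_psubset_below_below rank_set_psubset_above_below
      by (meson linorder_neqE)
  next
    case 3
    then show ?thesis
      using \<open>y \<noteq> e\<close> assms rank_set_psubset_below_above rank_set_psubset_above_above
      by (meson linorder_neqE)
  qed
qed

end

theorem proposition6:
  fixes a :: "'x::{linorder,finite} \<Rightarrow> 'x \<Rightarrow> 'z::linorder"
    and \<Pi> :: "'x \<Rightarrow> 'z \<Rightarrow> real"
  assumes "aggregative_game a"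
    and "quasiconcave \<Pi>"
    and "quasisubmodular \<Pi>"
    and "\<exists>xs. fESS a \<Pi> xs"
  shows "no_money_pump a \<Pi>"
proof -
  obtain e where "fESS a \<Pi> e"
    using assms(4) by blast
  interpret fESS_game a \<Pi> e
    using assms \<open>fESS a \<Pi> e\<close> by unfold_locales
  show ?thesis
    using beats_imp_rank_set_psubset
    by (intro no_money_pump_if_potential[where \<phi> = "\<lambda>x. card (rank_set x)"])
      (simp add: psubset_card_mono)
qed

end
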